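(* Assume (A1)–(A3) and (SH), and let $z_t$ be defined by $x_0:=x_1$, $z_t=x_t+\frac{\beta_{1,t}}{1-\beta_{1,t}}(x_t-x_{t-1})$. Then for every $t\ge1$, $\mathbb{E}[f(z_{t+1})-f(z_1)]\le T_1+T_2+T_3+T_4+T_5+T_6$, where $T_1=-\mathbb{E}\big[\sum_{i=1}^t\langle\nabla f(z_i),\frac{\beta_{1,i}}{1-\beta_{1,i}}(\frac{\alpha_i}{\sqrt{\hat v_i}}-\frac{\alpha_{i-1}}{\sqrt{\hat v_{i-1}}})\odot m_{i-1}\rangle\big]$, $T_2=-\mathbb{E}\big[\sum_{i=1}^t\alpha_i\langle\nabla f(z_i),g_i/\sqrt{\hat v_i}\rangle\big]$, $T_3=-\mathbb{E}\big[\sum_{i=1}^t\langle\nabla f(z_i),(\frac{\beta_{1,i+1}}{1-\beta_{1,i+1}}-\frac{\beta_{1,i}}{1-\beta_{1,i}})\alpha_im_i/\sqrt{\hat v_i}\rangle\big]$, $T_4=\mathbb{E}\big[\sum_{i=1}^t\frac32L\|(\frac{\beta_{1,i+1}}{1-\beta_{1,i+1}}-\frac{\beta_{1,i}}{1-\beta_{1,i}})\alpha_im_i/\sqrt{\hat v_i}\|^2\big]$, $T_5=\mathbb{E}\big[\sum_{i=1}^t\frac32L\|\frac{\beta_{1,i}}{1-\beta_{1,i}}(\frac{\alpha_i}{\sqrt{\hat v_i}}-\frac{\alpha_{i-1}}{\sqrt{\hat v_{i-1}}})\odot m_{i-1}\|^2\big]$, $T_6=\mathbb{E}\big[\sum_{i=1}^t\frac32L\|\alpha_ig_i/\sqrt{\hat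 v_i}\|^2\big]$.
   Context: Problem: minimize $f(x)=\mathbb{E}_\xi[f(x;\xi)]$ over $x\in\mathbb{R}^d$. All vector operations (division, square root, squaring) are coordinatewise, $\odot$ is the coordinatewise product, $\|\cdot\|$ is the Euclidean norm. Generalized Adam: given $x_1\in\mathbb{R}^d$, stepsizes $\alpha_t>0$, momentum parameters $\beta_{1,t}\in[0,1)$ and maps $h_t$, set $m_0=0$ and for $t=1,2,\dots$: $m_t=\beta_{1,t}m_{t-1}+(1-\beta_{1,t})g_t$; $\hat v_t=h_t(g_1,\dots,g_t)\in\mathbb{R}^d$ with strictly positive entries; $x_{t+1}=x_t-\alpha_t m_t/\sqrt{\hat v_t}$, where $g_t$ is a stochastic gradient evaluated at $x_t$. By convention $(\alpha_1/\sqrt{\hat v_1}-\alpha_0/\sqrt{\hat v_0})\odot m_0=0$ (the $i=1$ terms of $T_1$ and $T_5$ vanish). Assumptions: (A1) $f$ is differentiable, $\|\nabla f(x)-\nabla f(y)\|\le L\|x-y\|$ for all $x,y$, and $f$ attains its minimum at some $x^*$ with $f(x^* )>-\infty$. (A2) $\|\nabla f(x)\|\le H$ for all $x$ and $\|g_t\|\le H$ for all $t$ almost surely. (A3) $g_t=\nabla f(x_t)+\zeta_t$ where the noise $\zeta_t$ has zero mean conditionally on $g_1,\dots,g_{t-1}$. Expectations are over all randomness in $\{g_t\}$. Standing hypotheses (SH): $\beta_1\in[0,1)$ with $\beta_{1,t}\le\beta_1$ for all $t$, the sequence $\beta_{1,t}\in[0,1)$ is non-increasing, and there is $G>0$ with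 $\|\alpha_t m_t/\sqrt{\hat v_t}\|\le G$ for all $t$ almost surely. *)

theory Defs
  imports "HOL-Probability.Probability"
begin

definition vmul :: "real^'n \<Rightarrow> real^'n \<Rightarrow> real^'n" where
  "vmul a b = (\<chi> i. a $ i * b $ i)"

definition vdiv :: "real^'n \<Rightarrow> real^'n \<Rightarrow> real^'n" where
  "vdiv a b = (\<chi> i. a $ i / b $ i)"

definition vsqrt :: "real^'n \<Rightarrow> real^'n" where
  "vsqrt a = (\<chi> i. sqrt (a $ i))"

text \<open>Generalized Adam, computed pathwise from a sequence gs of stochastic gradients
  (gs t = g_t, t >= 1).  beta t = beta_{1,t}, alpha t = alpha_t, h t = h_t.\<close>

primrec adam_m :: "(nat \<Rightarrow> real) \<Rightarrow> (nat \<Rightarrow> real^'n) \<Rightarrow> nat \<Rightarrow> real^'n" where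
  "adam_m beta gs 0 = 0"
| "adam_m beta gs (Suc t) = beta (Suc t) *\<^sub>R adam_m beta gs t + (1 - beta (Suc t)) *\<^sub>R gs (Suc t)"

definition adam_v :: "(nat \<Rightarrow> (real^'n) list \<Rightarrow> real^'n) \<Rightarrow> (nat \<Rightarrow> real^'n) \<Rightarrow> nat \<Rightarrow> real^'n" where
  "adam_v h gs t = h t (map gs [1..<Suc t])"

definition adam_rate :: "(nat \<Rightarrow> real) \<Rightarrow> (nat \<Rightarrow> (real^'n) list \<Rightarrow> real^'n) \<Rightarrow> (nat \<Rightarrow> real^'n) \<Rightarrow> nat \<Rightarrow> real^'n" where
  "adam_rate alpha h gs t = (\<chi> j. alpha t / sqrt (adam_v h gs t $ j))"

text \<open>Iterates: x_0 := x_1 (convention used for z_t), x_1 given,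
  x_{t+1} = x_t - alpha_t m_t / sqrt(vhat_t).\<close>
fun adam_x :: "real^'n \<Rightarrow> (nat \<Rightarrow> real) \<Rightarrow> (nat \<Rightarrow> real) \<Rightarrow> (nat \<Rightarrow> (real^'n) list \<Rightarrow> real^'n)
                \<Rightarrow> (nat \<Rightarrow> real^'n) \<Rightarrow> nat \<Rightarrow> real^'n" where
  "adam_x x1 alpha beta h gs 0 = x1"
| "adam_x x1 alpha beta h gs (Suc 0) = x1"
| "adam_x x1 alpha beta h gs (Suc (Suc t)) =
     adam_x x1 alpha beta h gs (Suc t)
     - alpha (Suc t) *\<^sub>R vdiv (adam_m beta gs (Suc t)) (vsqrt (adam_v h gs (Suc t)))"

definition adam_z :: "real^'n \<Rightarrow> (nat \<Rightarrow> real) \<Rightarrow> (nat \<Rightarrow> real) \<Rightarrow> (nat \<Rightarrow> (real^'n) list \<Rightarrow> real^'n)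
                \<Rightarrow> (nat \<Rightarrow> real^'n) \<Rightarrow> nat \<Rightarrow> real^'n" where
  "adam_z x1 alpha beta h gs t =
     adam_x x1 alpha beta h gs t
     + (beta t / (1 - beta t)) *\<^sub>R (adam_x x1 alpha beta h gs t - adam_x x1 alpha beta h gs (t - 1))"

definition past_sigma :: "'a measure \<Rightarrow> (nat \<Rightarrow> 'a \<Rightarrow> real^'n) \<Rightarrow> nat \<Rightarrow> 'a measure" where
  "past_sigma M g t = sigma (space M)
     {g j -` B \<inter> space M | j B. j \<in> {1..<t} \<and> B \<in> sets borel}"

end

theory Submission
  imports Defs
begin

text \<open>
  The bound holds pathwise, for every realisation of the gradients. By the choice of the
  momentum weights, \<open>z\<^sub>i\<^sub>+\<^sub>1 - z\<^sub>i\<close> splits into the three vectors whose inner products with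
  \<open>\<nabla>f(z\<^sub>i)\<close> form the summands of \<open>T\<^sub>1, T\<^sub>2, T\<^sub>3\<close>; the descent inequality for an
  \<open>L\<close>-smooth function together with \<open>\<parallel>a + b + c\<parallel>\<^sup>2 \<le> 3(\<parallel>a\<parallel>\<^sup>2 + \<parallel>b\<parallel>\<^sup>2 + \<parallel>c\<parallel>\<^sup>2)\<close> bounds
  each increment \<open>f(z\<^sub>i\<^sub>+\<^sub>1) - f(z\<^sub>i)\<close>, and the increments telescope. Taking expectations only
  requires integrability: the summands of \<open>T\<^sub>3\<close> and \<open>T\<^sub>4\<close> are bounded because
  \<open>\<parallel>\<nabla>f\<parallel> \<le> H\<close> and the updates are bounded by \<open>G\<close>, and \<open>f(z\<^sub>t\<^sub>+\<^sub>1) - f(z\<^sub>1)\<close> is squeezed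
  between \<open>min f - f(x\<^sub>1)\<close> and the integrable right-hand side.
\<close>

lemma borel_measurable_vec_nth:
  "f \<in> borel_measurable M \<Longrightarrow> (\<lambda>x. (f x :: real^'n) $ i) \<in> borel_measurable M"
  using measurable_compose[OF _ borel_measurable_nth] .

lemma borel_measurable_vec_lambda:
  fixes f :: "'a \<Rightarrow> 'n::finite \<Rightarrow> real"
  assumes "\<And>i. (\<lambda>x. f x i) \<in> borel_measurable M"
  shows "(\<lambda>x. \<chi> i. f x i) \<in> borel_measurable M"
  using assms by (subst borel_measurable_euclidean_space) (auto simp: Basis_vec_def inner_axis)

lemma borel_measurable_vdiv:
  "A \<in> borel_measurable M \<Longrightarrow> B \<in> borel_measurable M \<Longrightarrow>
    (\<lambda>x. vdiv (A x) (B x :: real^'n)) \<in> borel_measurable M"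
  unfolding vdiv_def
  by (intro borel_measurable_vec_lambda borel_measurable_divide borel_measurable_vec_nth)

lemma borel_measurable_vsqrt:
  "A \<in> borel_measurable M \<Longrightarrow> (\<lambda>x. vsqrt (A x :: real^'n)) \<in> borel_measurable M"
  unfolding vsqrt_def
  by (intro borel_measurable_vec_lambda measurable_compose[OF borel_measurable_vec_nth borel_measurable_sqrt])

lemma lipschitz_factor_nonneg:
  assumes "norm (F x - F y) \<le> L * norm (x - y)" and "x \<noteq> y"
  shows "0 \<le> L"
proof (rule ccontr)
  assume "\<not> 0 \<le> L"
  then have "L * norm (x - y) < 0"
    using \<open>x \<noteq> y\<close> by (simp add: mult_neg_pos)
  with assms(1) show False
    by (meson norm_ge_zero order.trans not_less)
qed

lemma norm_add3_power2_le:
  fixes a b c :: "'a::real_normed_vector"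
  shows "(norm (a + b + c))\<^sup>2 \<le> 3 * ((norm a)\<^sup>2 + (norm b)\<^sup>2 + (norm c)\<^sup>2)"
proof -
  have "norm (a + b + c) \<le> norm a + norm b + norm c"
    by (meson add_mono norm_triangle_ineq order_trans order_refl)
  then have "(norm (a + b + c))\<^sup>2 \<le> (norm a + norm b + norm c)\<^sup>2"
    by (simp add: power_mono)
  also have "\<dots> \<le> 3 * ((norm a)\<^sup>2 + (norm b)\<^sup>2 + (norm c)\<^sup>2)"
  proof -
    have "0 \<le> (norm a - norm b)\<^sup>2 + (norm b - norm c)\<^sup>2 + (norm a - norm c)\<^sup>2"
      by simp
    then show ?thesis by (simp add: power2_eq_square algebra_simps)
  qed
  finally show ?thesis .
qed

lemma lipschitz_gradient_upper_bound:
  fixes f :: "'a::real_inner \<Rightarrow> real"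
  assumes grad: "\<And>x. (f has_derivative (\<lambda>v. Df x \<bullet> v)) (at x)"
    and lip: "\<And>x y. norm (Df x - Df y) \<le> L * norm (x - y)"
    and L: "0 \<le> L"
  shows "f (x + d) \<le> f x + Df x \<bullet> d + L / 2 * (norm d)\<^sup>2"
proof -
  define \<phi> where "\<phi> s = f (x + s *\<^sub>R d) - s * (Df x \<bullet> d) - L / 2 * s\<^sup>2 * (norm d)\<^sup>2" for s
  have f_line: "((\<lambda>s. f (x + s *\<^sub>R d)) has_real_derivative (Df (x + s *\<^sub>R d) \<bullet> d)) (at s)" for s
  proof -
    have "((\<lambda>s. x + s *\<^sub>R d) has_derivative (\<lambda>r. r *\<^sub>R d)) (at s)"
      by (auto intro!: derivative_eq_intros)
    from has_derivative_compose[OF this grad]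
    have "((\<lambda>s. f (x + s *\<^sub>R d)) has_derivative (\<lambda>r. r * (Df (x + s *\<^sub>R d) \<bullet> d))) (at s)"
      by (simp add: o_def)
    then show ?thesis
      by (simp add: has_field_derivative_def mult.commute[of _ "Df (x + s *\<^sub>R d) \<bullet> d"])
  qed
  have \<phi>_deriv: "(\<phi> has_real_derivative (Df (x + s *\<^sub>R d) \<bullet> d - Df x \<bullet> d - L * s * (norm d)\<^sup>2)) (at s)"
    for s
    unfolding \<phi>_def by (rule derivative_eq_intros f_line refl | simp)+
  have "\<phi> 1 \<le> \<phi> 0"
  proof (rule DERIV_nonpos_imp_nonincreasing[of 0 1 \<phi>])
    fix s :: real assume s: "0 \<le> s" "s \<le> 1"
    have "Df (x + s *\<^sub>R d) \<bullet> d - Df x \<bullet> d = (Df (x + s *\<^sub>R d) - Df x) \<bullet> d"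
      by (simp add: inner_diff_left)
    also have "\<dots> \<le> norm (Df (x + s *\<^sub>R d) - Df x) * norm d"
      by (rule norm_cauchy_schwarz)
    also have "\<dots> \<le> L * norm (s *\<^sub>R d) * norm d"
      using lip[of "x + s *\<^sub>R d" x] by (simp add: mult_right_mono)
    also have "\<dots> = L * s * (norm d)\<^sup>2"
      using s by (simp add: power2_eq_square)
    finally show "\<exists>y. (\<phi> has_real_derivative y) (at s) \<and> y \<le> 0"
      using \<phi>_deriv[of s]
      by (intro exI[of _ "Df (x + s *\<^sub>R d) \<bullet> d - Df x \<bullet> d - L * s * (norm d)\<^sup>2"]) auto
  qed simp
  then show ?thesis by (simp add: \<phi>_def)
qed

lemma lipschitz_gradient_upper_bound3:
  fixes f :: "'a::real_inner \<Rightarrow> real"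
  assumes grad: "\<And>x. (f has_derivative (\<lambda>v. Df x \<bullet> v)) (at x)"
    and lip: "\<And>x y. norm (Df x - Df y) \<le> L * norm (x - y)"
    and L: "0 \<le> L"
  shows "f (x - a - b - c) - f x \<le> - (Df x \<bullet> a) - Df x \<bullet> b - Df x \<bullet> c
    + 3 / 2 * L * (norm a)\<^sup>2 + 3 / 2 * L * (norm b)\<^sup>2 + 3 / 2 * L * (norm c)\<^sup>2"
proof -
  have "x + - (a + b + c) = x - a - b - c"
    by (simp add: algebra_simps)
  then have "f (x - a - b - c) \<le> f x + Df x \<bullet> - (a + b + c) + L / 2 * (norm (- (a + b + c)))\<^sup>2"
    using lipschitz_gradient_upper_bound[OF grad lip L, of x "- (a + b + c)"] by (simp only:)
  moreover have "Df x \<bullet> - (a + b + c) = - (Df x \<bullet> a) - Df x \<bullet> b - Df x \<bullet> c"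
    by (simp add: inner_diff_right)
  moreover have "L / 2 * (norm (- (a + b + c)))\<^sup>2
      \<le> L / 2 * (3 * ((norm a)\<^sup>2 + (norm b)\<^sup>2 + (norm c)\<^sup>2))"
    unfolding norm_minus_cancel using L norm_add3_power2_le[of a b c]
    by (intro mult_left_mono) auto
  moreover have "L / 2 * (3 * ((norm a)\<^sup>2 + (norm b)\<^sup>2 + (norm c)\<^sup>2))
      = 3 / 2 * L * (norm a)\<^sup>2 + 3 / 2 * L * (norm b)\<^sup>2 + 3 / 2 * L * (norm c)\<^sup>2"
    by (simp add: distrib_left)
  ultimately show ?thesis
    by linarith
qed

lemma adam_x_Suc_diff:
  "adam_x x1 alpha beta h gs (Suc k) - adam_x x1 alpha beta h gs k
     = - vmul (adam_rate alpha h gs k) (adam_m beta gs k)"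
  by (cases k) (simp_all add: vmul_def vdiv_def vsqrt_def adam_rate_def vec_eq_iff)

text \<open>
  One coordinate of \<open>z\<^sub>i\<^sub>+\<^sub>1 - z\<^sub>i\<close>: \<open>x = x\<^sub>i\<close>, \<open>m\<^sub>0 = m\<^sub>i\<^sub>-\<^sub>1\<close>, \<open>g = g\<^sub>i\<close>, \<open>a = \<alpha>\<^sub>i\<close>, \<open>s = \<surd>v\<^sub>i\<close>,
  \<open>r\<^sub>0 = \<alpha>\<^sub>i\<^sub>-\<^sub>1/\<surd>v\<^sub>i\<^sub>-\<^sub>1\<close>, \<open>b = \<beta>\<^sub>i\<close> and \<open>q = \<beta>\<^sub>i\<^sub>+\<^sub>1/(1 - \<beta>\<^sub>i\<^sub>+\<^sub>1)\<close>. The identity rests on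
  \<open>(1 + u) m\<^sub>i = u m\<^sub>i\<^sub>-\<^sub>1 + g\<^sub>i\<close> for \<open>u = b/(1 - b)\<close>.
\<close>
lemma adam_z_step_coordinate:
  fixes x m0 g a s r0 q b :: real
  assumes "b \<noteq> 1"
  shows "(x - a / s * (b * m0 + (1 - b) * g)) + q * ((x - a / s * (b * m0 + (1 - b) * g)) - x)
      - (x + b / (1 - b) * (x - (x + r0 * m0)))
    = - (b / (1 - b) * ((a / s - r0) * m0)) - a * (g / s)
      - (q - b / (1 - b)) * (a * ((b * m0 + (1 - b) * g) / s))"
proof -
  define u where "u = b / (1 - b)"
  define r1 where "r1 = a / s"
  define m1 where "m1 = b * m0 + (1 - b) * g"
  have "(1 + u) * m1 = u * m0 + g"
    using assms by (simp add: u_def m1_def field_simps)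
  then have "r1 * ((1 + u) * m1) = r1 * (u * m0 + g)" by simp
  then have "(x - r1 * m1) + q * ((x - r1 * m1) - x) - (x + u * (x - (x + r0 * m0)))
      = - (u * ((r1 - r0) * m0)) - r1 * g - (q - u) * (r1 * m1)"
    by (simp add: algebra_simps)
  moreover have "a * (g / s) = r1 * g" "a * (m1 / s) = r1 * m1"
    by (simp_all add: r1_def)
  ultimately show ?thesis
    by (simp only: u_def[symmetric] m1_def[symmetric] r1_def[symmetric])
qed

lemma adam_z_Suc_diff:
  assumes "1 \<le> i" and "beta i \<noteq> 1"
  shows "adam_z x1 alpha beta h gs (i + 1) - adam_z x1 alpha beta h gs i =
    - ((beta i / (1 - beta i)) *\<^sub>R
         vmul (adam_rate alpha h gs i - adam_rate alpha h gs (i - 1)) (adam_m beta gs (i - 1)))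
    - alpha i *\<^sub>R vdiv (gs i) (vsqrt (adam_v h gs i))
    - (beta (i + 1) / (1 - beta (i + 1)) - beta i / (1 - beta i)) *\<^sub>R
         (alpha i *\<^sub>R vdiv (adam_m beta gs i) (vsqrt (adam_v h gs i)))"
proof -
  obtain k where k: "i = Suc k" using assms(1) by (cases i) auto
  let ?x = "adam_x x1 alpha beta h gs"
  have x_next: "?x (Suc (Suc k)) = ?x (Suc k) - vmul (adam_rate alpha h gs (Suc k)) (adam_m beta gs (Suc k))"
    using adam_x_Suc_diff[of x1 alpha beta h gs "Suc k"] by (simp add: algebra_simps)
  have x_prev: "?x k = ?x (Suc k) + vmul (adam_rate alpha h gs k) (adam_m beta gs k)"
    using adam_x_Suc_diff[of x1 alpha beta h gs k] by (simp add: algebra_simps)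
  have "beta (Suc k) \<noteq> 1" using assms(2) k by simp
  then show ?thesis
    unfolding k adam_z_def Suc_eq_plus1[symmetric] diff_Suc_1 x_next x_prev
    by (simp only: vec_eq_iff vmul_def vdiv_def vsqrt_def adam_rate_def adam_m.simps
        vector_minus_component vector_add_component vector_scaleR_component vec_lambda_beta
        vector_uminus_component real_scaleR_def) (intro allI adam_z_step_coordinate)
qed

lemma adam_z_descent_pathwise:
  fixes f :: "real^'n \<Rightarrow> real" and gs :: "nat \<Rightarrow> real^'n"
  assumes grad: "\<And>x. (f has_derivative (\<lambda>v. Df x \<bullet> v)) (at x)"
    and lip: "\<And>x y. norm (Df x - Df y) \<le> L * norm (x - y)"
    and L: "0 \<le> L"
    and beta_ne_1: "\<And>s. 1 \<le> s \<Longrightarrow> beta s \<noteq> 1"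
  shows "f (adam_z x1 alpha beta h gs (t + 1)) - f (adam_z x1 alpha beta h gs 1)
    \<le> - (\<Sum>i=1..t.
          Df (adam_z x1 alpha beta h gs i) \<bullet>
            ((beta i / (1 - beta i)) *\<^sub>R
               vmul (adam_rate alpha h gs i - adam_rate alpha h gs (i - 1))
                    (adam_m beta gs (i - 1))))
      - (\<Sum>i=1..t.
          alpha i * (Df (adam_z x1 alpha beta h gs i) \<bullet>
            vdiv (gs i) (vsqrt (adam_v h gs i))))
      - (\<Sum>i=1..t.
          Df (adam_z x1 alpha beta h gs i) \<bullet>
            ((beta (i + 1) / (1 - beta (i + 1)) - beta i / (1 - beta i)) *\<^sub>R
               (alpha i *\<^sub>R vdiv (adam_m beta gs i) (vsqrt (adam_v h gs i)))))
      + (\<Sum>i=1..t.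
          3 / 2 * L * (norm ((beta (i + 1) / (1 - beta (i + 1)) - beta i / (1 - beta i)) *\<^sub>R
               (alpha i *\<^sub>R vdiv (adam_m beta gs i) (vsqrt (adam_v h gs i)))))\<^sup>2)
      + (\<Sum>i=1..t.
          3 / 2 * L * (norm ((beta i / (1 - beta i)) *\<^sub>R
               vmul (adam_rate alpha h gs i - adam_rate alpha h gs (i - 1))
                    (adam_m beta gs (i - 1))))\<^sup>2)
      + (\<Sum>i=1..t.
          3 / 2 * L * (norm (alpha i *\<^sub>R vdiv (gs i) (vsqrt (adam_v h gs i))))\<^sup>2)"
proof -
  let ?z = "adam_z x1 alpha beta h gs"
  define A where "A i = (beta i / (1 - beta i)) *\<^sub>R
    vmul (adam_rate alpha h gs i - adam_rate alpha h gs (i - 1)) (adam_m beta gs (i - 1))" for i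
  define B where "B i = alpha i *\<^sub>R vdiv (gs i) (vsqrt (adam_v h gs i))" for i
  define C where "C i = (beta (i + 1) / (1 - beta (i + 1)) - beta i / (1 - beta i)) *\<^sub>R
    (alpha i *\<^sub>R vdiv (adam_m beta gs i) (vsqrt (adam_v h gs i)))" for i
  have increment: "f (?z (Suc i)) - f (?z i) \<le>
      - (Df (?z i) \<bullet> A i) - alpha i * (Df (?z i) \<bullet> vdiv (gs i) (vsqrt (adam_v h gs i)))
      - Df (?z i) \<bullet> C i + 3 / 2 * L * (norm (C i))\<^sup>2 + 3 / 2 * L * (norm (A i))\<^sup>2
      + 3 / 2 * L * (norm (B i))\<^sup>2" if "1 \<le> i" for i
  proof -
    have "?z (Suc i) = ?z i - A i - B i - C i"
      using adam_z_Suc_diff[of i beta x1 alpha h gs] that beta_ne_1[OF that]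
      unfolding A_def B_def C_def by (simp add: algebra_simps)
    then show ?thesis
      using lipschitz_gradient_upper_bound3[OF grad lip L, of "?z i" "A i" "B i" "C i"]
      by (simp add: B_def)
  qed
  have "f (?z (t + 1)) - f (?z 1) = (\<Sum>i=1..t. f (?z (Suc i)) - f (?z i))"
    using sum_Suc_diff[of 1 t "\<lambda>i. f (?z i)"] by simp
  also have "\<dots> \<le> (\<Sum>i=1..t. - (Df (?z i) \<bullet> A i)
      - alpha i * (Df (?z i) \<bullet> vdiv (gs i) (vsqrt (adam_v h gs i)))
      - Df (?z i) \<bullet> C i + 3 / 2 * L * (norm (C i))\<^sup>2 + 3 / 2 * L * (norm (A i))\<^sup>2
      + 3 / 2 * L * (norm (B i))\<^sup>2)"
    by (intro sum_mono increment) simp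
  finally show ?thesis
    by (simp add: A_def B_def C_def sum.distrib sum_subtractf sum_negf)
qed

lemma adam_m_measurable:
  assumes "\<And>j. g j \<in> borel_measurable M"
  shows "(\<lambda>\<omega>. adam_m beta (\<lambda>j. g j \<omega>) k) \<in> borel_measurable M"
  by (induction k) (auto intro!: borel_measurable_add borel_measurable_scaleR assms)

lemma adam_update_measurable:
  assumes "\<And>j. g j \<in> borel_measurable M"
    and "(\<lambda>\<omega>. adam_v h (\<lambda>j. g j \<omega>) k) \<in> borel_measurable M"
  shows "(\<lambda>\<omega>. alpha k *\<^sub>R vdiv (adam_m beta (\<lambda>j. g j \<omega>) k) (vsqrt (adam_v h (\<lambda>j. g j \<omega>) k)))
    \<in> borel_measurable M"
  by (intro borel_measurable_scaleR borel_measurable_const borel_measurable_vdiv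
      borel_measurable_vsqrt adam_m_measurable assms)

lemma adam_x_measurable:
  assumes gmeas: "\<And>j. g j \<in> borel_measurable M"
    and hmeas: "\<And>s. 1 \<le> s \<Longrightarrow> (\<lambda>\<omega>. adam_v h (\<lambda>j. g j \<omega>) s) \<in> borel_measurable M"
  shows "(\<lambda>\<omega>. adam_x x1 alpha beta h (\<lambda>j. g j \<omega>) k) \<in> borel_measurable M"
proof -
  have "(\<lambda>\<omega>. adam_x x1 alpha beta h (\<lambda>j. g j \<omega>) (Suc k)) \<in> borel_measurable M" for k
  proof (induction k)
    case (Suc k)
    show ?case
      unfolding adam_x.simps(3)
      by (intro borel_measurable_diff Suc.IH adam_update_measurable gmeas hmeas) simp
  qed simp
  then show ?thesis by (cases k) simp_all
qed

lemma adam_z_measurable: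
  assumes "\<And>j. g j \<in> borel_measurable M"
    and "\<And>s. 1 \<le> s \<Longrightarrow> (\<lambda>\<omega>. adam_v h (\<lambda>j. g j \<omega>) s) \<in> borel_measurable M"
  shows "(\<lambda>\<omega>. adam_z x1 alpha beta h (\<lambda>j. g j \<omega>) k) \<in> borel_measurable M"
  unfolding adam_z_def
  by (intro borel_measurable_add borel_measurable_diff borel_measurable_scaleR
      borel_measurable_const adam_x_measurable assms)

lemma (in finite_measure) integrable_inner_bounded:
  fixes X Y :: "'a \<Rightarrow> 'b::euclidean_space"
  assumes "X \<in> borel_measurable M" "Y \<in> borel_measurable M"
    and "AE x in M. norm (X x) \<le> a" "AE x in M. norm (Y x) \<le> b"
  shows "integrable M (\<lambda>x. X x \<bullet> Y x)"
proof (rule integrable_const_bound[where B = "a * b"])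
  show "AE x in M. norm (X x \<bullet> Y x) \<le> a * b"
    using assms(3,4)
  proof eventually_elim
    case (elim x)
    have "norm (X x \<bullet> Y x) \<le> norm (X x) * norm (Y x)"
      by (simp add: Cauchy_Schwarz_ineq2)
    also have "\<dots> \<le> a * b"
      using elim by (intro mult_mono) (auto intro: order_trans[OF norm_ge_zero])
    finally show ?case .
  qed
qed (intro borel_measurable_inner assms)

lemma (in finite_measure) integrable_norm_power2_bounded:
  fixes Y :: "'a \<Rightarrow> 'b::real_normed_vector"
  assumes "Y \<in> borel_measurable M" "AE x in M. norm (Y x) \<le> b"
  shows "integrable M (\<lambda>x. (norm (Y x))\<^sup>2)"
proof (rule integrable_const_bound[where B = "b\<^sup>2"])
  show "AE x in M. norm ((norm (Y x))\<^sup>2) \<le> b\<^sup>2"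
    using assms(2) by eventually_elim (simp add: power_mono)
qed (intro borel_measurable_power measurable_compose[OF assms(1) borel_measurable_norm])

lemma (in finite_measure) integral_mono_bounded_below:
  fixes X Y :: "'a \<Rightarrow> real"
  assumes "integrable M Y" "X \<in> borel_measurable M"
    and "\<And>x. c \<le> X x" "\<And>x. X x \<le> Y x"
  shows "integral\<^sup>L M X \<le> integral\<^sup>L M Y"
proof (rule integral_mono)
  show "integrable M X"
  proof (rule Bochner_Integration.integrable_bound[where f = "\<lambda>x. \<bar>Y x\<bar> + \<bar>c\<bar>"])
    show "AE x in M. norm (X x) \<le> norm (\<bar>Y x\<bar> + \<bar>c\<bar>)"
    proof (intro AE_I2)
      fix x
      have "c \<le> X x" "X x \<le> Y x" using assms(3,4) .
      then show "norm (X x) \<le> norm (\<bar>Y x\<bar> + \<bar>c\<bar>)" by (simp add: real_norm_def)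
    qed
  qed (use assms in auto)
qed (use assms in auto)

lemma (in prob_space) expectation_le_of_pointwise_le:
  fixes X S\<^sub>1 S\<^sub>2 S\<^sub>3 S\<^sub>4 S\<^sub>5 S\<^sub>6 :: "'a \<Rightarrow> real"
  assumes "integrable M S\<^sub>1" "integrable M S\<^sub>2" "integrable M S\<^sub>3"
    and "integrable M S\<^sub>4" "integrable M S\<^sub>5" "integrable M S\<^sub>6"
    and "X \<in> borel_measurable M" "\<And>x. c \<le> X x"
    and "\<And>x. X x \<le> - S\<^sub>1 x - S\<^sub>2 x - S\<^sub>3 x + S\<^sub>4 x + S\<^sub>5 x + S\<^sub>6 x"
  shows "expectation X \<le> - expectation S\<^sub>1 - expectation S\<^sub>2 - expectation S\<^sub>3
    + expectation S\<^sub>4 + expectation S\<^sub>5 + expectation S\<^sub>6"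
  using integral_mono_bounded_below[of "\<lambda>x. - S\<^sub>1 x - S\<^sub>2 x - S\<^sub>3 x + S\<^sub>4 x + S\<^sub>5 x + S\<^sub>6 x" X c] assms
  by simp

theorem lemma2:
  fixes M :: "'a measure"
    and f :: "real^'n \<Rightarrow> real" and Df :: "real^'n \<Rightarrow> real^'n"
    and g :: "nat \<Rightarrow> 'a \<Rightarrow> real^'n"
    and x1 :: "real^'n" and alpha beta :: "nat \<Rightarrow> real"
    and h :: "nat \<Rightarrow> (real^'n) list \<Rightarrow> real^'n"
    and L H G beta1 :: real and t :: nat
  assumes prob: "prob_space M"
    \<comment> \<open>(A1)\<close>
    and grad: "\<And>x. (f has_derivative (\<lambda>v. Df x \<bullet> v)) (at x)"
    and lip: "\<And>x y. norm (Df x - Df y) \<le> L * norm (x - y)"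
    and min: "\<exists>xs. \<forall>x. f xs \<le> f x"
    \<comment> \<open>(A2)\<close>
    and gradbd: "\<And>x. norm (Df x) \<le> H"
    and gbd: "\<And>s. 1 \<le> s \<Longrightarrow> AE \<omega> in M. norm (g s \<omega>) \<le> H"
    and gmeas: "\<And>s. g s \<in> borel_measurable M"
    and hpos: "\<And>s gs j. 1 \<le> s \<Longrightarrow> length gs = s \<Longrightarrow> 0 < h s gs $ j"
    and hmeas: "\<And>s. 1 \<le> s \<Longrightarrow> (\<lambda>\<omega>. adam_v h (\<lambda>j. g j \<omega>) s) \<in> borel_measurable M"
    \<comment> \<open>(A3)\<close>
    and noise: "\<And>s k. 1 \<le> s \<Longrightarrow> AE \<omega> in M.
        real_cond_exp M (past_sigma M g s)
          (\<lambda>\<omega>. (g s \<omega> - Df (adam_x x1 alpha beta h (\<lambda>j. g j \<omega>) s)) $ k) \<omega> = 0"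
    \<comment> \<open>(SH)\<close>
    and alpha_pos: "\<And>s. 1 \<le> s \<Longrightarrow> 0 < alpha s"
    and beta1: "0 \<le> beta1" "beta1 < 1"
    and beta_range: "\<And>s. 1 \<le> s \<Longrightarrow> 0 \<le> beta s \<and> beta s < 1"
    and beta_le: "\<And>s. 1 \<le> s \<Longrightarrow> beta s \<le> beta1"
    and beta_mono: "\<And>r s. 1 \<le> r \<Longrightarrow> r \<le> s \<Longrightarrow> beta s \<le> beta r"
    and Gpos: "0 < G"
    and Gbd: "\<And>s. 1 \<le> s \<Longrightarrow> AE \<omega> in M.
        norm (alpha s *\<^sub>R vdiv (adam_m beta (\<lambda>j. g j \<omega>) s) (vsqrt (adam_v h (\<lambda>j. g j \<omega>) s))) \<le> G"
    \<comment> \<open>the expectations defining T_1, T_2, T_5, T_6 exist (tacit in the paper)\<close>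
    and int1: "integrable M (\<lambda>\<omega>. \<Sum>i=1..t.
        Df (adam_z x1 alpha beta h (\<lambda>j. g j \<omega>) i) \<bullet>
          ((beta i / (1 - beta i)) *\<^sub>R
             vmul (adam_rate alpha h (\<lambda>j. g j \<omega>) i - adam_rate alpha h (\<lambda>j. g j \<omega>) (i - 1))
                  (adam_m beta (\<lambda>j. g j \<omega>) (i - 1))))"
    and int2: "integrable M (\<lambda>\<omega>. \<Sum>i=1..t.
        alpha i * (Df (adam_z x1 alpha beta h (\<lambda>j. g j \<omega>) i) \<bullet>
          vdiv (g i \<omega>) (vsqrt (adam_v h (\<lambda>j. g j \<omega>) i))))"
    and int5: "integrable M (\<lambda>\<omega>. \<Sum>i=1..t.
        3 / 2 * L * (norm ((beta i / (1 - beta i)) *\<^sub>R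
             vmul (adam_rate alpha h (\<lambda>j. g j \<omega>) i - adam_rate alpha h (\<lambda>j. g j \<omega>) (i - 1))
                  (adam_m beta (\<lambda>j. g j \<omega>) (i - 1))))\<^sup>2)"
    and int6: "integrable M (\<lambda>\<omega>. \<Sum>i=1..t.
        3 / 2 * L * (norm (alpha i *\<^sub>R vdiv (g i \<omega>) (vsqrt (adam_v h (\<lambda>j. g j \<omega>) i))))\<^sup>2)"
    and t1: "1 \<le> t"
  shows "prob_space.expectation M (\<lambda>\<omega>.
            f (adam_z x1 alpha beta h (\<lambda>j. g j \<omega>) (t + 1)) - f (adam_z x1 alpha beta h (\<lambda>j. g j \<omega>) 1))
    \<le> - prob_space.expectation M (\<lambda>\<omega>. \<Sum>i=1..t.
          Df (adam_z x1 alpha beta h (\<lambda>j. g j \<omega>) i) \<bullet>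
            ((beta i / (1 - beta i)) *\<^sub>R
               vmul (adam_rate alpha h (\<lambda>j. g j \<omega>) i - adam_rate alpha h (\<lambda>j. g j \<omega>) (i - 1))
                    (adam_m beta (\<lambda>j. g j \<omega>) (i - 1))))
      - prob_space.expectation M (\<lambda>\<omega>. \<Sum>i=1..t.
          alpha i * (Df (adam_z x1 alpha beta h (\<lambda>j. g j \<omega>) i) \<bullet>
            vdiv (g i \<omega>) (vsqrt (adam_v h (\<lambda>j. g j \<omega>) i))))
      - prob_space.expectation M (\<lambda>\<omega>. \<Sum>i=1..t.
          Df (adam_z x1 alpha beta h (\<lambda>j. g j \<omega>) i) \<bullet>
            ((beta (i + 1) / (1 - beta (i + 1)) - beta i / (1 - beta i)) *\<^sub>R
               (alpha i *\<^sub>R vdiv (adam_m beta (\<lambda>j. g j \<omega>) i) (vsqrt (adam_v h (\<lambda>j. g j \<omega>) i)))))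
      + prob_space.expectation M (\<lambda>\<omega>. \<Sum>i=1..t.
          3 / 2 * L * (norm ((beta (i + 1) / (1 - beta (i + 1)) - beta i / (1 - beta i)) *\<^sub>R
               (alpha i *\<^sub>R vdiv (adam_m beta (\<lambda>j. g j \<omega>) i) (vsqrt (adam_v h (\<lambda>j. g j \<omega>) i)))))\<^sup>2)
      + prob_space.expectation M (\<lambda>\<omega>. \<Sum>i=1..t.
          3 / 2 * L * (norm ((beta i / (1 - beta i)) *\<^sub>R
               vmul (adam_rate alpha h (\<lambda>j. g j \<omega>) i - adam_rate alpha h (\<lambda>j. g j \<omega>) (i - 1))
                    (adam_m beta (\<lambda>j. g j \<omega>) (i - 1))))\<^sup>2)
      + prob_space.expectation M (\<lambda>\<omega>. \<Sum>i=1..t.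
          3 / 2 * L * (norm (alpha i *\<^sub>R vdiv (g i \<omega>) (vsqrt (adam_v h (\<lambda>j. g j \<omega>) i))))\<^sup>2)"
proof -
  interpret prob_space M by (rule prob)
  let ?z = "\<lambda>\<omega>. adam_z x1 alpha beta h (\<lambda>j. g j \<omega>)"
  let ?update = "\<lambda>i \<omega>. alpha i *\<^sub>R vdiv (adam_m beta (\<lambda>j. g j \<omega>) i) (vsqrt (adam_v h (\<lambda>j. g j \<omega>) i))"
  have L: "0 \<le> L"
    using lipschitz_factor_nonneg[OF lip[of 1 0]] by simp
  have beta_ne_1: "\<And>s. 1 \<le> s \<Longrightarrow> beta s \<noteq> 1"
    using beta_range by force
  obtain xmin where xmin: "\<And>x. f xmin \<le> f x"
    using min by blast
  have Df_cont: "continuous_on UNIV Df"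
    using L lip by (intro lipschitz_on_continuous_on[of L]) (auto simp: lipschitz_on_def dist_norm)
  have f_cont: "continuous_on UNIV f"
    using grad by (intro has_derivative_continuous_on) simp
  have z_meas: "(\<lambda>\<omega>. ?z \<omega> i) \<in> borel_measurable M" for i
    by (rule adam_z_measurable[OF gmeas hmeas])
  have Df_bound: "AE \<omega> in M. norm (Df (?z \<omega> i)) \<le> H" for i
    using gradbd by simp
  have update_bound: "AE \<omega> in M. norm (c *\<^sub>R ?update i \<omega>) \<le> \<bar>c\<bar> * G" if "1 \<le> i" for i c
    using Gbd[OF that] by eventually_elim (metis abs_ge_zero mult_left_mono norm_scaleR)
  have update_meas: "1 \<le> i \<Longrightarrow> (\<lambda>\<omega>. c *\<^sub>R ?update i \<omega>) \<in> borel_measurable M" for i c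
    by (intro borel_measurable_scaleR borel_measurable_const adam_update_measurable gmeas hmeas)
  show ?thesis
  proof (rule expectation_le_of_pointwise_le[OF int1 int2 _ _ int5 int6])
    show "integrable M (\<lambda>\<omega>. \<Sum>i=1..t. Df (?z \<omega> i) \<bullet>
      ((beta (i + 1) / (1 - beta (i + 1)) - beta i / (1 - beta i)) *\<^sub>R ?update i \<omega>))"
      by (rule Bochner_Integration.integrable_sum,
          rule integrable_inner_bounded[OF borel_measurable_continuous_on[OF Df_cont z_meas] update_meas Df_bound update_bound]) auto
    show "integrable M (\<lambda>\<omega>. \<Sum>i=1..t. 3 / 2 * L *
      (norm ((beta (i + 1) / (1 - beta (i + 1)) - beta i / (1 - beta i)) *\<^sub>R ?update i \<omega>))\<^sup>2)"
      by (rule Bochner_Integration.integrable_sum, rule integrable_mult_right,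
          rule integrable_norm_power2_bounded[OF update_meas update_bound]) auto
    show "(\<lambda>\<omega>. f (?z \<omega> (t + 1)) - f (?z \<omega> 1)) \<in> borel_measurable M"
      by (intro borel_measurable_diff borel_measurable_continuous_on[OF f_cont z_meas])
    show "f xmin - f x1 \<le> f (?z \<omega> (t + 1)) - f (?z \<omega> 1)" for \<omega>
      using xmin by (simp add: adam_z_def)
  qed (rule adam_z_descent_pathwise[OF grad lip L beta_ne_1])
qed

end
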